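(* For any $0 \le \alpha \le \beta \le 1$ and $p \in [0,1]$, $$p\,|p - \alpha| + (1-p)\,|p - \beta| \le 2\left[\,\left|p(1-\alpha) - (1-p)\beta\right| + (\beta - \alpha)\min\{p(1-\alpha), (1-p)\beta\}\right].$$ *)

theory Defs
  imports Complex_Main
begin

end

theory Submission
  imports Defs
begin

text \<open>
  Write \<open>A = p(1 - \<alpha>)\<close> and \<open>B = (1 - p)\<beta>\<close>. The key identity is
  \<open>A - B = p(p - \<alpha>) + (1 - p)(p - \<beta>)\<close>, so outside the interval \<open>\<alpha> < p < \<beta>\<close>, where both
  summands have the same sign, the left-hand side is just \<open>\<bar>A - B\<bar>\<close>. Inside the interval
  and for \<open>A \<le> B\<close>, the defect \<open>2(B - A) + 2(\<beta> - \<alpha>)A - LHS\<close> equals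
  \<open>(1 + 2\<alpha>)(B - A) + 2(p - \<alpha>)(\<beta> - p) \<ge> 0\<close>. The case \<open>B \<le> A\<close> follows from the substitution
  \<open>(p, \<alpha>, \<beta>) \<mapsto> (1 - p, 1 - \<beta>, 1 - \<alpha>)\<close>, which preserves the inequality and swaps \<open>A\<close> and \<open>B\<close>.
\<close>

lemma lemma16_ordered_case:
  fixes \<alpha> \<beta> p :: real
  assumes "0 \<le> \<alpha>" and "\<alpha> \<le> \<beta>" and "\<beta> \<le> 1" and "0 \<le> p" and "p \<le> 1"
    and A_le_B: "p * (1 - \<alpha>) \<le> (1 - p) * \<beta>"
  shows "p * \<bar>p - \<alpha>\<bar> + (1 - p) * \<bar>p - \<beta>\<bar>
    \<le> 2 * ((1 - p) * \<beta> - p * (1 - \<alpha>) + (\<beta> - \<alpha>) * (p * (1 - \<alpha>)))"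
proof -
  have gap_nonneg: "0 \<le> (\<beta> - \<alpha>) * (p * (1 - \<alpha>))"
    using assms by (simp add: mult_nonneg_nonneg)
  consider "p \<le> \<alpha>" | "\<beta> \<le> p" | "\<alpha> < p" "p < \<beta>"
    by linarith
  then show ?thesis
  proof cases
    case 1
    then have "p * \<bar>p - \<alpha>\<bar> + (1 - p) * \<bar>p - \<beta>\<bar> = (1 - p) * \<beta> - p * (1 - \<alpha>)"
      using assms by (simp add: abs_if algebra_simps)
    then show ?thesis
      using A_le_B gap_nonneg by (smt (verit))
  next
    case 2
    then have "p * \<bar>p - \<alpha>\<bar> + (1 - p) * \<bar>p - \<beta>\<bar> = p * (1 - \<alpha>) - (1 - p) * \<beta>"
      using assms by (simp add: abs_if algebra_simps)
    then show ?thesis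
      using A_le_B gap_nonneg by (smt (verit))
  next
    case 3
    have "2 * ((1 - p) * \<beta> - p * (1 - \<alpha>) + (\<beta> - \<alpha>) * (p * (1 - \<alpha>)))
        - (p * (p - \<alpha>) + (1 - p) * (\<beta> - p))
      = (1 + 2 * \<alpha>) * ((1 - p) * \<beta> - p * (1 - \<alpha>)) + 2 * ((p - \<alpha>) * (\<beta> - p))"
      by (simp add: algebra_simps)
    also have "\<dots> \<ge> 0"
      using assms A_le_B 3 by (simp add: mult_nonneg_nonneg)
    finally show ?thesis
      using 3 by simp
  qed
qed

theorem lemma16:
  fixes \<alpha> \<beta> p :: real
  assumes "0 \<le> \<alpha>" and "\<alpha> \<le> \<beta>" and "\<beta> \<le> 1"
    and "0 \<le> p" and "p \<le> 1"
  shows "p * \<bar>p - \<alpha>\<bar> + (1 - p) * \<bar>p - \<beta>\<bar>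
    \<le> 2 * (\<bar>p * (1 - \<alpha>) - (1 - p) * \<beta>\<bar> + (\<beta> - \<alpha>) * min (p * (1 - \<alpha>)) ((1 - p) * \<beta>))"
proof (cases "p * (1 - \<alpha>) \<le> (1 - p) * \<beta>")
  case True
  then show ?thesis
    using lemma16_ordered_case[OF assms True] by (simp add: min_def)
next
  case False
  then have "(1 - p) * (1 - (1 - \<beta>)) \<le> (1 - (1 - p)) * (1 - \<alpha>)"
    by simp
  from lemma16_ordered_case[OF _ _ _ _ _ this] assms
  have "(1 - p) * \<bar>p - \<beta>\<bar> + p * \<bar>p - \<alpha>\<bar>
    \<le> 2 * (p * (1 - \<alpha>) - (1 - p) * \<beta> + (\<beta> - \<alpha>) * ((1 - p) * \<beta>))"
    by (simp add: abs_minus_commute)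
  then show ?thesis
    using False by (simp add: min_def)
qed

end
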